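(* Let $\pi$ be a probability distribution on $[K]^n$ ($K\ge2$). The Markov kernel $P_{\mathrm{R}}$ is $\pi$-reversible. Moreover, if $\pi(c)>0$ for every $c\in[K]^n$, then $P_{\mathrm{R}}$ is irreducible, aperiodic and uniformly ergodic.
   Context: Notation: $[K]=\{1,\dots,K\}$; $n_k(c)=\#\{i:c_i=k\}$; $(c_{-i},k)$ is $c$ with $c_i$ replaced by $k$; $\pi(c_i=k\mid c_{-i})=\pi((c_{-i},k))/\sum_j\pi((c_{-i},j))$. $\mathcal{K}=\{(k,k')\in[K]^2:k<k'\}$ and $p_c(k,k')=\frac{n_k(c)+n_{k'}(c)}{(K-1)n}$ for $(k,k')\in\mathcal K$. $r(c,i,k_-,k_+)=\frac{n_{k_-}(c)}{n_{k_+}(c)+1}\cdot\frac{\pi(c_i=k_+\mid c_{-i})}{\pi(c_i=k_-\mid c_{-i})}$. $P_{\mathrm{R}}$ is the kernel on $[K]^n$ that from $c$: samples $(k,k')\sim p_c$; sets $(k_-,k_+)=(k,k')$ or $(k',k)$ with probability $1/2$ each; if $n_{k_-}(c)=0$ stays at $c$; otherwise picks $i$ uniformly from $\{i':c_{i'}=k_-\}$ and moves to $(c_{-i},k_+)$ with probability $\min\{1,r(c,i,k_-,k_+)\}$, else stays at $c$. *)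

theory Defs
  imports Complex_Main "HOL-Library.FuncSet"
begin

type_synonym config = "nat \<Rightarrow> nat"

definition states :: "nat \<Rightarrow> nat \<Rightarrow> config set" where
  "states K n = PiE {..<n} (\<lambda>_. {1..K})"

definition cnt :: "nat \<Rightarrow> config \<Rightarrow> nat \<Rightarrow> nat" where
  "cnt n c k = card {i \<in> {..<n}. c i = k}"

definition cond_prob :: "nat \<Rightarrow> (config \<Rightarrow> real) \<Rightarrow> config \<Rightarrow> nat \<Rightarrow> nat \<Rightarrow> real" where
  "cond_prob K \<pi> c i k = \<pi> (c(i := k)) / (\<Sum>j\<in>{1..K}. \<pi> (c(i := j)))"

definition pairs :: "nat \<Rightarrow> (nat \<times> nat) set" where
  "pairs K = {(k, k'). k \<in> {1..K} \<and> k' \<in> {1..K} \<and> k < k'}"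

definition pc :: "nat \<Rightarrow> nat \<Rightarrow> config \<Rightarrow> nat \<Rightarrow> nat \<Rightarrow> real" where
  "pc K n c k k' = real (cnt n c k + cnt n c k') / (real (K - 1) * real n)"

definition ratio :: "nat \<Rightarrow> nat \<Rightarrow> (config \<Rightarrow> real) \<Rightarrow> config \<Rightarrow> nat \<Rightarrow> nat \<Rightarrow> nat \<Rightarrow> real" where
  "ratio K n \<pi> c i km kp =
     real (cnt n c km) / (real (cnt n c kp) + 1) * (cond_prob K \<pi> c i kp / cond_prob K \<pi> c i km)"

text \<open>Probability of moving from c to c' once the ordered pair (k_-, k_+) has been chosen.\<close>
definition move_prob :: "nat \<Rightarrow> nat \<Rightarrow> (config \<Rightarrow> real) \<Rightarrow> config \<Rightarrow> nat \<Rightarrow> nat \<Rightarrow> config \<Rightarrow> real" where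
  "move_prob K n \<pi> c km kp c' =
     (if cnt n c km = 0 then (if c' = c then 1 else 0)
      else (\<Sum>i\<in>{i \<in> {..<n}. c i = km}.
              (1 / real (cnt n c km)) *
              (min 1 (ratio K n \<pi> c i km kp) * (if c' = c(i := kp) then 1 else 0)
               + (1 - min 1 (ratio K n \<pi> c i km kp)) * (if c' = c then 1 else 0))))"

definition PR :: "nat \<Rightarrow> nat \<Rightarrow> (config \<Rightarrow> real) \<Rightarrow> config \<Rightarrow> config \<Rightarrow> real" where
  "PR K n \<pi> c c' =
     (\<Sum>(k, k')\<in>pairs K. pc K n c k k' *
        (1/2 * move_prob K n \<pi> c k k' c' + 1/2 * move_prob K n \<pi> c k' k c'))"

definition prob_dist :: "'s set \<Rightarrow> ('s \<Rightarrow> real) \<Rightarrow> bool" where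
  "prob_dist S \<pi> \<longleftrightarrow> (\<forall>x\<in>S. 0 \<le> \<pi> x) \<and> (\<Sum>x\<in>S. \<pi> x) = 1"

definition reversible :: "'s set \<Rightarrow> ('s \<Rightarrow> 's \<Rightarrow> real) \<Rightarrow> ('s \<Rightarrow> real) \<Rightarrow> bool" where
  "reversible S P \<pi> \<longleftrightarrow> (\<forall>x\<in>S. \<forall>y\<in>S. \<pi> x * P x y = \<pi> y * P y x)"

fun mpow :: "'s set \<Rightarrow> ('s \<Rightarrow> 's \<Rightarrow> real) \<Rightarrow> nat \<Rightarrow> 's \<Rightarrow> 's \<Rightarrow> real" where
  "mpow S P 0 x y = (if x = y then 1 else 0)"
| "mpow S P (Suc m) x y = (\<Sum>z\<in>S. mpow S P m x z * P z y)"

definition irreducible_chain :: "'s set \<Rightarrow> ('s \<Rightarrow> 's \<Rightarrow> real) \<Rightarrow> bool" where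
  "irreducible_chain S P \<longleftrightarrow> (\<forall>x\<in>S. \<forall>y\<in>S. \<exists>m. mpow S P m x y > 0)"

definition period :: "'s set \<Rightarrow> ('s \<Rightarrow> 's \<Rightarrow> real) \<Rightarrow> 's \<Rightarrow> nat" where
  "period S P x = Gcd {m. 1 \<le> m \<and> mpow S P m x x > 0}"

definition aperiodic_chain :: "'s set \<Rightarrow> ('s \<Rightarrow> 's \<Rightarrow> real) \<Rightarrow> bool" where
  "aperiodic_chain S P \<longleftrightarrow> (\<forall>x\<in>S. period S P x = 1)"

definition tv_dist :: "'s set \<Rightarrow> ('s \<Rightarrow> real) \<Rightarrow> ('s \<Rightarrow> real) \<Rightarrow> real" where
  "tv_dist S \<mu> \<nu> = Max ((\<lambda>A. \<bar>(\<Sum>y\<in>A. \<mu> y) - (\<Sum>y\<in>A. \<nu> y)\<bar>) ` Pow S)"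

definition uniformly_ergodic :: "'s set \<Rightarrow> ('s \<Rightarrow> 's \<Rightarrow> real) \<Rightarrow> ('s \<Rightarrow> real) \<Rightarrow> bool" where
  "uniformly_ergodic S P \<pi> \<longleftrightarrow>
     (\<exists>M \<rho>::real. 0 < M \<and> 0 \<le> \<rho> \<and> \<rho> < 1 \<and>
        (\<forall>x\<in>S. \<forall>m. tv_dist S (mpow S P m x) \<pi> \<le> M * \<rho> ^ m))"

end

(* A move of P_R changes one site i of c from label a to label b, giving c'.  Since
   pi(c_i = b | c_{-i}) / pi(c_i = a | c_{-i}) = pi(c') / pi(c), the probability flow of such a move is
     pi(c) P_R(c, c') = p_c(a, b) / 2 * min (pi(c) / n_a(c)) (pi(c') / (n_b(c) + 1)),
   and this is symmetric in c and c' because n_a(c') + 1 = n_a(c), n_b(c') = n_b(c) + 1 and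
   p_{c'}(a, b) = p_c(a, b): detailed balance holds.

   If pi > 0, every single-site change has positive probability, and the all-ones configuration has
   a self-loop (no site carries label 2, so choosing k_- = 2 leaves it in place).  Walking to it in at
   most n steps, idling there, and walking to the target in at most n steps shows that
   P_R^(2n+m) is entrywise positive for every m.  This gives irreducibility, aperiodicity (2n and
   2n+1 are both return times) and, by Doeblin's contraction of the l1 distance to pi, uniform
   ergodicity. *)

theory Submission
  imports Defs
begin

section \<open>Powers of finite stochastic matrices\<close>

definition stochastic :: "'s set \<Rightarrow> ('s \<Rightarrow> 's \<Rightarrow> real) \<Rightarrow> bool" where
  "stochastic S P \<longleftrightarrow> (\<forall>x\<in>S. \<forall>y\<in>S. 0 \<le> P x y) \<and> (\<forall>x\<in>S. (\<Sum>y\<in>S. P x y) = 1)"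

definition stationary :: "'s set \<Rightarrow> ('s \<Rightarrow> 's \<Rightarrow> real) \<Rightarrow> ('s \<Rightarrow> real) \<Rightarrow> bool" where
  "stationary S P \<pi> \<longleftrightarrow> (\<forall>y\<in>S. (\<Sum>x\<in>S. \<pi> x * P x y) = \<pi> y)"

lemma reversible_imp_stationary:
  assumes "reversible S P \<pi>" and "stochastic S P"
  shows "stationary S P \<pi>"
  unfolding stationary_def
proof
  fix y assume y: "y \<in> S"
  have "(\<Sum>x\<in>S. \<pi> x * P x y) = (\<Sum>x\<in>S. \<pi> y * P y x)"
    using assms(1) y by (intro sum.cong) (auto simp: reversible_def)
  also have "\<dots> = \<pi> y"
    using assms(2) y by (simp add: stochastic_def flip: sum_distrib_left)
  finally show "(\<Sum>x\<in>S. \<pi> x * P x y) = \<pi> y" .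
qed

lemma mpow_nonneg:
  assumes "stochastic S P" and "x \<in> S" and "y \<in> S"
  shows "0 \<le> mpow S P m x y"
  using assms(3)
  by (induction m arbitrary: y) (use assms(1) in \<open>auto intro!: sum_nonneg simp: stochastic_def\<close>)

lemma mpow_one:
  assumes "finite S" and "x \<in> S"
  shows "mpow S P 1 x y = P x y"
proof -
  have "mpow S P 1 x y = (\<Sum>z\<in>S. if x = z then P z y else 0)"
    unfolding One_nat_def mpow.simps by (intro sum.cong) auto
  then show ?thesis using assms by simp
qed

lemma mpow_add:
  assumes "finite S" and "y \<in> S"
  shows "mpow S P (a + b) x y = (\<Sum>z\<in>S. mpow S P a x z * mpow S P b z y)"
  using assms(2)
proof (induction b arbitrary: y)
  case 0
  then show ?case using assms(1) by (simp add: if_distrib cong: if_cong)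
next
  case (Suc b)
  have "mpow S P (a + Suc b) x y = (\<Sum>w\<in>S. (\<Sum>z\<in>S. mpow S P a x z * mpow S P b z w) * P w y)"
    using Suc by simp
  also have "\<dots> = (\<Sum>z\<in>S. mpow S P a x z * (\<Sum>w\<in>S. mpow S P b z w * P w y))"
    unfolding sum_distrib_right sum_distrib_left mult.assoc by (rule sum.swap)
  finally show ?case by simp
qed

lemma mpow_rowsum:
  assumes "finite S" and "stochastic S P" and "x \<in> S"
  shows "(\<Sum>y\<in>S. mpow S P m x y) = 1"
proof (induction m)
  case 0
  then show ?case using assms by simp
next
  case (Suc m)
  have "(\<Sum>y\<in>S. mpow S P (Suc m) x y) = (\<Sum>z\<in>S. mpow S P m x z * (\<Sum>y\<in>S. P z y))"
    unfolding mpow.simps sum_distrib_left by (rule sum.swap)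
  also have "\<dots> = (\<Sum>z\<in>S. mpow S P m x z)"
    using assms(2) by (simp add: stochastic_def)
  finally show ?case using Suc by simp
qed

lemma mpow_stationary:
  assumes "finite S" and "stationary S P \<pi>" and "y \<in> S"
  shows "(\<Sum>x\<in>S. \<pi> x * mpow S P m x y) = \<pi> y"
  using assms(3)
proof (induction m arbitrary: y)
  case 0
  then show ?case using assms(1) by (simp add: if_distrib cong: if_cong)
next
  case (Suc m)
  have "(\<Sum>x\<in>S. \<pi> x * mpow S P (Suc m) x y) = (\<Sum>z\<in>S. (\<Sum>x\<in>S. \<pi> x * mpow S P m x z) * P z y)"
    unfolding mpow.simps sum_distrib_right sum_distrib_left mult.assoc by (rule sum.swap)
  also have "\<dots> = (\<Sum>z\<in>S. \<pi> z * P z y)"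
    using Suc by (intro sum.cong) auto
  finally show ?case using assms(2) Suc.prems by (simp add: stationary_def)
qed

lemma mpow_add_ge:
  assumes "finite S" and "stochastic S P"
    and "x \<in> S" and "y \<in> S" and "z \<in> S"
  shows "mpow S P a x z * mpow S P b z y \<le> mpow S P (a + b) x y"
  unfolding mpow_add[OF assms(1,4)] using assms
  by (intro member_le_sum) (auto intro!: mult_nonneg_nonneg mpow_nonneg simp del: mpow.simps)

lemma mpow_pos_trans:
  assumes "finite S" and "stochastic S P"
    and "x \<in> S" and "y \<in> S" and "z \<in> S"
    and "0 < mpow S P a x z" and "0 < mpow S P b z y"
  shows "0 < mpow S P (a + b) x y"
  using mpow_add_ge[OF assms(1-5), where a = a and b = b] mult_pos_pos[OF assms(6,7)] by linarith

lemma mpow_pos_loop: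
  assumes "finite S" and "stochastic S P"
    and "h \<in> S" and "0 < P h h"
  shows "0 < mpow S P m h h"
proof (induction m)
  case (Suc m)
  then show ?case
    using mpow_pos_trans[OF assms(1-3,3,3) Suc, where b = 1] assms(4) mpow_one[OF assms(1,3)] by simp
qed simp

lemma mpow_pos_via_hub:
  assumes "finite S" and "stochastic S P"
    and "h \<in> S" and "0 < P h h"
    and to_hub: "\<And>x. x \<in> S \<Longrightarrow> \<exists>d\<le>N. 0 < mpow S P d x h"
    and from_hub: "\<And>y. y \<in> S \<Longrightarrow> \<exists>d\<le>N. 0 < mpow S P d h y"
    and "x \<in> S" and "y \<in> S"
  shows "0 < mpow S P (N + m + N) x y"
proof -
  obtain d1 where d1: "d1 \<le> N" "0 < mpow S P d1 x h" using to_hub[OF \<open>x \<in> S\<close>] by blast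
  obtain d2 where d2: "d2 \<le> N" "0 < mpow S P d2 h y" using from_hub[OF \<open>y \<in> S\<close>] by blast
  have "0 < mpow S P (d1 + ((N - d1) + m + (N - d2))) x h"
    by (rule mpow_pos_trans[OF assms(1,2) \<open>x \<in> S\<close> assms(3,3) d1(2) mpow_pos_loop[OF assms(1-4)]])
  then have "0 < mpow S P (d1 + ((N - d1) + m + (N - d2)) + d2) x y"
    by (rule mpow_pos_trans[OF assms(1,2) \<open>x \<in> S\<close> \<open>y \<in> S\<close> assms(3) _ d2(2)])
  moreover have "d1 + ((N - d1) + m + (N - d2)) + d2 = N + m + N" using d1(1) d2(1) by simp
  ultimately show ?thesis by simp
qed

lemma aperiodic_chainI:
  assumes "\<And>x. x \<in> S \<Longrightarrow> 0 < mpow S P M x x \<and> 0 < mpow S P (Suc M) x x" and "M \<ge> 1"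
  shows "aperiodic_chain S P"
  unfolding aperiodic_chain_def period_def
proof
  fix x assume "x \<in> S"
  let ?A = "{m. 1 \<le> m \<and> 0 < mpow S P m x x}"
  have "M \<in> ?A" "Suc M \<in> ?A" using assms \<open>x \<in> S\<close> by auto
  then have "Gcd ?A dvd M" "Gcd ?A dvd M + 1" by (simp_all add: Gcd_dvd)
  then show "Gcd ?A = 1" using dvd_add_right_iff[of "Gcd ?A" M 1] by simp
qed

section \<open>Doeblin's condition implies uniform ergodicity\<close>

definition l1_dist :: "'s set \<Rightarrow> ('s \<Rightarrow> real) \<Rightarrow> ('s \<Rightarrow> real) \<Rightarrow> real" where
  "l1_dist S \<mu> \<nu> = (\<Sum>y\<in>S. \<bar>\<mu> y - \<nu> y\<bar>)"

lemma tv_dist_le_l1_dist: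
  assumes "finite S"
  shows "tv_dist S \<mu> \<nu> \<le> l1_dist S \<mu> \<nu>"
  unfolding tv_dist_def
proof (rule Max.boundedI)
  show "finite ((\<lambda>A. \<bar>sum \<mu> A - sum \<nu> A\<bar>) ` Pow S)" using assms by simp
next
  fix t assume "t \<in> (\<lambda>A. \<bar>sum \<mu> A - sum \<nu> A\<bar>) ` Pow S"
  then obtain A where A: "A \<subseteq> S" and t: "t = \<bar>\<Sum>y\<in>A. \<mu> y - \<nu> y\<bar>"
    by (auto simp: sum_subtractf)
  have "t \<le> (\<Sum>y\<in>A. \<bar>\<mu> y - \<nu> y\<bar>)" unfolding t by (rule sum_abs)
  also have "\<dots> \<le> l1_dist S \<mu> \<nu>" unfolding l1_dist_def using A assms by (intro sum_mono2) auto
  finally show "t \<le> l1_dist S \<mu> \<nu>" .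
qed auto

lemma l1_dist_le_2:
  assumes "prob_dist S \<mu>" and "prob_dist S \<nu>"
  shows "l1_dist S \<mu> \<nu> \<le> 2"
proof -
  have "l1_dist S \<mu> \<nu> \<le> (\<Sum>y\<in>S. \<mu> y + \<nu> y)"
    unfolding l1_dist_def
  proof (intro sum_mono)
    fix y assume "y \<in> S"
    then have "0 \<le> \<mu> y" "0 \<le> \<nu> y" using assms by (auto simp: prob_dist_def)
    then show "\<bar>\<mu> y - \<nu> y\<bar> \<le> \<mu> y + \<nu> y" by linarith
  qed
  also have "\<dots> = 2" using assms by (simp add: prob_dist_def sum.distrib)
  finally show ?thesis .
qed

lemma prob_dist_mpow:
  assumes "finite S" and "stochastic S P" and "x \<in> S"
  shows "prob_dist S (mpow S P m x)"
  using mpow_nonneg[OF assms(2,3)] mpow_rowsum[OF assms] by (simp add: prob_dist_def)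

text \<open>Since \<open>v\<close> has total mass \<open>0\<close>, subtracting \<open>\<delta>\<close> from every entry of \<open>Q\<close> does not change \<open>v Q\<close>,
  and the shifted matrix is nonnegative with row sums \<open>1 - |S| \<delta>\<close>.\<close>

lemma doeblin_contraction:
  fixes v :: "'s \<Rightarrow> real" and \<delta> :: real
  assumes "finite S" and "stochastic S Q" and "\<And>z y. z \<in> S \<Longrightarrow> y \<in> S \<Longrightarrow> \<delta> \<le> Q z y"
    and "(\<Sum>z\<in>S. v z) = 0"
  shows "(\<Sum>y\<in>S. \<bar>\<Sum>z\<in>S. v z * Q z y\<bar>) \<le> (1 - card S * \<delta>) * (\<Sum>z\<in>S. \<bar>v z\<bar>)"
proof -
  have shift: "(\<Sum>z\<in>S. v z * Q z y) = (\<Sum>z\<in>S. v z * (Q z y - \<delta>))" for y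
  proof -
    have "(\<Sum>z\<in>S. v z * (Q z y - \<delta>)) = (\<Sum>z\<in>S. v z * Q z y) - (\<Sum>z\<in>S. v z) * \<delta>"
      by (simp add: algebra_simps sum_subtractf sum_distrib_left)
    then show ?thesis using assms(4) by simp
  qed
  have "(\<Sum>y\<in>S. \<bar>\<Sum>z\<in>S. v z * Q z y\<bar>) \<le> (\<Sum>y\<in>S. \<Sum>z\<in>S. \<bar>v z\<bar> * (Q z y - \<delta>))"
    unfolding shift
  proof (intro sum_mono)
    fix y assume "y \<in> S"
    have "\<bar>\<Sum>z\<in>S. v z * (Q z y - \<delta>)\<bar> \<le> (\<Sum>z\<in>S. \<bar>v z * (Q z y - \<delta>)\<bar>)" by (rule sum_abs)
    also have "\<dots> = (\<Sum>z\<in>S. \<bar>v z\<bar> * (Q z y - \<delta>))"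
      using assms(3) \<open>y \<in> S\<close> by (intro sum.cong) (auto simp: abs_mult)
    finally show "\<bar>\<Sum>z\<in>S. v z * (Q z y - \<delta>)\<bar> \<le> (\<Sum>z\<in>S. \<bar>v z\<bar> * (Q z y - \<delta>))" .
  qed
  also have "\<dots> = (\<Sum>z\<in>S. \<bar>v z\<bar> * (\<Sum>y\<in>S. Q z y - \<delta>))"
    by (subst sum.swap) (simp add: sum_distrib_left)
  also have "\<dots> = (\<Sum>z\<in>S. \<bar>v z\<bar> * (1 - card S * \<delta>))"
    using assms(2) by (intro sum.cong) (auto simp: sum_subtractf stochastic_def)
  finally show ?thesis by (simp add: sum_distrib_right mult.commute)
qed

lemma l1_dist_mpow_contract:
  assumes "finite S" and "stochastic S P" and "prob_dist S \<pi>" and "stationary S P \<pi>"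
    and "\<And>z y. z \<in> S \<Longrightarrow> y \<in> S \<Longrightarrow> \<delta> \<le> mpow S P N z y" and "x \<in> S"
  shows "l1_dist S (mpow S P (m + N) x) \<pi> \<le> (1 - real (card S) * \<delta>) * l1_dist S (mpow S P m x) \<pi>"
proof -
  define v where "v z = mpow S P m x z - \<pi> z" for z
  have mass: "(\<Sum>z\<in>S. v z) = 0"
    using mpow_rowsum[OF assms(1,2,6)] assms(3) by (simp add: v_def sum_subtractf prob_dist_def)
  have "stochastic S (mpow S P N)"
    using mpow_nonneg[OF assms(2)] mpow_rowsum[OF assms(1,2)] by (simp add: stochastic_def)
  then have "(\<Sum>y\<in>S. \<bar>\<Sum>z\<in>S. v z * mpow S P N z y\<bar>) \<le> (1 - card S * \<delta>) * (\<Sum>z\<in>S. \<bar>v z\<bar>)"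
    using doeblin_contraction[OF assms(1) _ _ mass] assms(5) by blast
  moreover have "(\<Sum>z\<in>S. v z * mpow S P N z y) = mpow S P (m + N) x y - \<pi> y" if "y \<in> S" for y
    using mpow_add[OF assms(1) that, of P m N x] mpow_stationary[OF assms(1,4) that, of N]
    by (simp add: v_def algebra_simps sum_subtractf)
  ultimately show ?thesis by (simp add: l1_dist_def v_def)
qed

lemma l1_dist_mpow_decay:
  assumes "finite S" and "stochastic S P" and "prob_dist S \<pi>" and "stationary S P \<pi>"
    and "\<And>z y. z \<in> S \<Longrightarrow> y \<in> S \<Longrightarrow> \<delta> \<le> mpow S P N z y" and "0 \<le> 1 - real (card S) * \<delta>"
    and "x \<in> S"
  shows "l1_dist S (mpow S P (r + k * N) x) \<pi> \<le> 2 * (1 - real (card S) * \<delta>) ^ k"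
proof (induction k)
  case 0
  show ?case using l1_dist_le_2[OF prob_dist_mpow[OF assms(1,2,7)] assms(3)] by simp
next
  case (Suc k)
  let ?\<beta> = "1 - real (card S) * \<delta>"
  have "l1_dist S (mpow S P (r + Suc k * N) x) \<pi> \<le> ?\<beta> * l1_dist S (mpow S P (r + k * N) x) \<pi>"
    using l1_dist_mpow_contract[OF assms(1-5,7), of "r + k * N"] by (simp add: algebra_simps)
  also have "\<dots> \<le> ?\<beta> * (2 * ?\<beta> ^ k)" using Suc assms(6) by (intro mult_left_mono)
  finally show ?case by simp
qed

lemma power_div_le_geometric:
  fixes \<beta> :: real
  assumes "0 \<le> \<beta>" and "\<beta> < 1" and "N \<ge> 1"
  obtains M \<rho> where "0 < M" and "0 \<le> \<rho>" and "\<rho> < 1" and "\<And>m. \<beta> ^ (m div N) \<le> M * \<rho> ^ m"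
proof
  define \<beta>' where "\<beta>' = max \<beta> (1/2)"
  have \<beta>': "0 < \<beta>'" "\<beta>' < 1" using assms by (auto simp: \<beta>'_def)
  define \<rho> where "\<rho> = root N \<beta>'"
  have \<rho>: "0 < \<rho>" "\<rho> < 1" "\<rho> ^ N = \<beta>'" using \<beta>' assms(3) by (auto simp: \<rho>_def)
  show "0 < 1 / \<beta>'" "0 \<le> \<rho>" "\<rho> < 1" using \<beta>' \<rho> by auto
  fix m
  have "m \<le> N * (m div N) + N"
    using mult_div_mod_eq[of N m] mod_less_divisor[of N m] assms(3) by linarith
  then have "\<rho> ^ (N * (m div N) + N) \<le> \<rho> ^ m" using \<rho> by (intro power_decreasing) auto
  then have "\<beta>' * \<beta>' ^ (m div N) \<le> \<rho> ^ m" by (simp add: power_add power_mult \<rho>(3) mult.commute)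
  moreover have "\<beta> ^ (m div N) \<le> \<beta>' ^ (m div N)"
    using assms(1) by (intro power_mono) (auto simp: \<beta>'_def)
  ultimately have "\<beta>' * \<beta> ^ (m div N) \<le> \<rho> ^ m"
    using \<beta>' by (meson mult_left_mono less_imp_le order_trans)
  then show "\<beta> ^ (m div N) \<le> 1 / \<beta>' * \<rho> ^ m" using \<beta>' by (simp add: field_simps)
qed

lemma uniformly_ergodicI:
  assumes fin: "finite S" and P: "stochastic S P" and \<pi>: "prob_dist S \<pi>" "stationary S P \<pi>"
    and "N \<ge> 1" and pos: "\<And>x y. x \<in> S \<Longrightarrow> y \<in> S \<Longrightarrow> 0 < mpow S P N x y"
  shows "uniformly_ergodic S P \<pi>"
proof -
  have "S \<noteq> {}" using \<pi>(1) by (auto simp: prob_dist_def)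
  define \<delta> where "\<delta> = Min ((\<lambda>(x, y). mpow S P N x y) ` (S \<times> S))"
  have \<delta>_le: "\<delta> \<le> mpow S P N x y" if "x \<in> S" "y \<in> S" for x y
    unfolding \<delta>_def using fin that by (intro Min_le) auto
  have "0 < \<delta>" unfolding \<delta>_def using fin \<open>S \<noteq> {}\<close> pos by (subst Min_gr_iff) auto
  define \<beta> where "\<beta> = 1 - card S * \<delta>"
  obtain x0 where "x0 \<in> S" using \<open>S \<noteq> {}\<close> by blast
  have "card S * \<delta> \<le> (\<Sum>y\<in>S. mpow S P N x0 y)"
    using \<delta>_le[OF \<open>x0 \<in> S\<close>] sum_mono[of S "\<lambda>_. \<delta>"] by simp
  then have "0 \<le> \<beta>" using mpow_rowsum[OF fin P \<open>x0 \<in> S\<close>] by (simp add: \<beta>_def)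
  have "\<beta> < 1" using \<open>0 < \<delta>\<close> fin \<open>S \<noteq> {}\<close> by (simp add: \<beta>_def card_gt_0_iff)
  obtain M \<rho> where M: "0 < M" "0 \<le> \<rho>" "\<rho> < 1" "\<And>m. \<beta> ^ (m div N) \<le> M * \<rho> ^ m"
    using power_div_le_geometric[OF \<open>0 \<le> \<beta>\<close> \<open>\<beta> < 1\<close> \<open>N \<ge> 1\<close>] by blast
  show ?thesis unfolding uniformly_ergodic_def
  proof (intro exI conjI ballI allI)
    fix x m assume "x \<in> S"
    have "tv_dist S (mpow S P m x) \<pi> \<le> l1_dist S (mpow S P (m mod N + (m div N) * N) x) \<pi>"
      using tv_dist_le_l1_dist[OF fin] by simp
    also have "\<dots> \<le> 2 * \<beta> ^ (m div N)"
      unfolding \<beta>_def by (rule l1_dist_mpow_decay[OF fin P \<pi> \<delta>_le \<open>0 \<le> \<beta>\<close>[unfolded \<beta>_def] \<open>x \<in> S\<close>])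
    also have "\<dots> \<le> (2 * M) * \<rho> ^ m" using M(4)[of m] by simp
    finally show "tv_dist S (mpow S P m x) \<pi> \<le> (2 * M) * \<rho> ^ m" .
  qed (use M in auto)
qed

section \<open>Configurations and label counts\<close>

lemma mem_states_iff:
  "x \<in> states K n \<longleftrightarrow> (\<forall>i<n. x i \<in> {1..K}) \<and> (\<forall>i\<ge>n. x i = undefined)"
  by (auto simp: states_def PiE_iff extensional_def)

lemma fun_upd_in_states: "x \<in> states K n \<Longrightarrow> i < n \<Longrightarrow> b \<in> {1..K} \<Longrightarrow> x(i := b) \<in> states K n"
  by (auto simp: mem_states_iff)

lemma finite_states: "finite (states K n)"
  by (simp add: states_def finite_PiE)

lemma sum_cnt:
  assumes "x \<in> states K n"
  shows "(\<Sum>k\<in>{1..K}. cnt n x k) = n"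
proof -
  have "(\<Sum>k\<in>{1..K}. cnt n x k) = (\<Sum>i<n. \<Sum>k\<in>{1..K}. if x i = k then 1 else 0)"
    unfolding cnt_def by (subst sum.swap) (simp flip: sum.inter_filter)
  also have "\<dots> = (\<Sum>i<n. 1)"
    using assms by (intro sum.cong) (auto simp: mem_states_iff)
  finally show ?thesis by simp
qed

lemma cnt_pos: "i < n \<Longrightarrow> 0 < cnt n x (x i)"
  unfolding cnt_def by (subst card_gt_0_iff) auto

lemma cnt_fun_upd_old:
  assumes "i < n" and "b \<noteq> x i"
  shows "cnt n (x(i := b)) (x i) = cnt n x (x i) - 1"
proof -
  have "{j \<in> {..<n}. (x(i := b)) j = x i} = {j \<in> {..<n}. x j = x i} - {i}" using assms by auto
  then show ?thesis unfolding cnt_def using assms by (simp add: card_Diff_singleton)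
qed

lemma cnt_fun_upd_new:
  assumes "i < n" and "b \<noteq> x i"
  shows "cnt n (x(i := b)) b = cnt n x b + 1"
proof -
  have "{j \<in> {..<n}. (x(i := b)) j = b} = insert i {j \<in> {..<n}. x j = b}" using assms by auto
  then show ?thesis unfolding cnt_def using assms by simp
qed

lemma finite_pairs: "finite (pairs K)"
  by (rule finite_subset[of _ "{1..K} \<times> {1..K}"]) (auto simp: pairs_def)

lemma sum_pairs: "(\<Sum>(k, k')\<in>pairs K. f k + f k') = real (K - 1) * (\<Sum>k\<in>{1..K}. f k)"
proof (induction K)
  case 0
  then show ?case by (simp add: pairs_def)
next
  case (Suc K)
  have split: "pairs (Suc K) = pairs K \<union> (\<lambda>k. (k, Suc K)) ` {1..K}"
    by (auto simp: pairs_def)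
  have "(\<Sum>(k, k')\<in>pairs (Suc K). f k + f k') =
      (\<Sum>(k, k')\<in>pairs K. f k + f k') + (\<Sum>(k, k')\<in>(\<lambda>k. (k, Suc K)) ` {1..K}. f k + f k')"
    unfolding split by (intro sum.union_disjoint finite_pairs) (auto simp: pairs_def)
  also have "(\<Sum>(k, k')\<in>(\<lambda>k. (k, Suc K)) ` {1..K}. f k + f k') = (\<Sum>k\<in>{1..K}. f k + f (Suc K))"
    by (subst sum.reindex) (auto simp: inj_on_def)
  finally show ?case using Suc
    by (cases K) (simp_all add: sum.distrib algebra_simps)
qed

lemma mpow_pos_hamming:
  assumes P: "stochastic (states K n) P"
    and moves: "\<And>x i b. x \<in> states K n \<Longrightarrow> i < n \<Longrightarrow> b \<in> {1..K} \<Longrightarrow> b \<noteq> x i \<Longrightarrow> 0 < P x (x(i := b))"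
    and "x \<in> states K n" and "y \<in> states K n"
  shows "0 < mpow (states K n) P (card {i \<in> {..<n}. x i \<noteq> y i}) x y"
  using assms(3)
proof (induction "card {i \<in> {..<n}. x i \<noteq> y i}" arbitrary: x)
  case 0
  have "x = y"
  proof
    fix j
    show "x j = y j"
    proof (cases "j < n")
      case True
      have "{i \<in> {..<n}. x i \<noteq> y i} = {}"
        using 0(1) card_0_eq[of "{i \<in> {..<n}. x i \<noteq> y i}"] by simp
      then show ?thesis using True by blast
    next
      case False
      then show ?thesis using 0(2) \<open>y \<in> states K n\<close> by (simp add: mem_states_iff)
    qed
  qed
  then show ?case by simp
next
  case (Suc d)
  have "{i \<in> {..<n}. x i \<noteq> y i} \<noteq> {}" using Suc.hyps(2) by (metis card.empty nat.distinct(1))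
  then obtain i where i: "i < n" "x i \<noteq> y i" by blast
  define x' where "x' = x(i := y i)"
  have "y i \<in> {1..K}" using \<open>y \<in> states K n\<close> i(1) by (auto simp: mem_states_iff)
  then have x': "x' \<in> states K n" "0 < P x x'"
    using fun_upd_in_states[OF Suc.prems i(1)] moves[OF Suc.prems i(1)] i(2) by (auto simp: x'_def)
  have "{j \<in> {..<n}. x' j \<noteq> y j} = {j \<in> {..<n}. x j \<noteq> y j} - {i}" by (auto simp: x'_def)
  then have "d = card {j \<in> {..<n}. x' j \<noteq> y j}" using Suc.hyps(2) i by simp
  then have "0 < mpow (states K n) P d x' y" using Suc.hyps(1) x'(1) by blast
  moreover have "0 < mpow (states K n) P 1 x x'" using x'(2) mpow_one[OF finite_states Suc.prems] by simp
  ultimately have "0 < mpow (states K n) P (1 + d) x y"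
    using mpow_pos_trans[OF finite_states P Suc.prems \<open>y \<in> states K n\<close> x'(1)] by blast
  then show ?case unfolding Suc.hyps(2)[symmetric] by simp
qed

section \<open>The kernel \<open>P\<^sub>R\<close>\<close>

lemma mult_min_ratio:
  fixes A B u w :: real
  assumes "0 < A" and "0 < B" and "0 \<le> u" and "0 \<le> w"
  shows "u / A * min 1 (A / B * (w / u)) = min (u / A) (w / B)"
proof (cases "u = 0")
  case False
  then show ?thesis using assms by (auto simp: min_def field_simps)
qed (use assms in auto)

context
  fixes K n :: nat and \<pi> :: "config \<Rightarrow> real"
  assumes K2: "K \<ge> 2" and n1: "n \<ge> 1" and \<pi>: "prob_dist (states K n) \<pi>"
begin

lemma cond_prob_nonneg:
  assumes "x \<in> states K n" and "i < n" and "k \<in> {1..K}"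
  shows "0 \<le> cond_prob K \<pi> x i k"
proof -
  have "0 \<le> \<pi> (x(i := j))" if "j \<in> {1..K}" for j
    using \<pi> fun_upd_in_states[OF assms(1,2) that] by (simp add: prob_dist_def)
  then show ?thesis unfolding cond_prob_def using assms(3) by (auto intro!: divide_nonneg_nonneg sum_nonneg)
qed

lemma move_prob_nonneg:
  assumes "x \<in> states K n" and "km \<in> {1..K}" and "kp \<in> {1..K}"
  shows "0 \<le> move_prob K n \<pi> x km kp y"
proof -
  have "0 \<le> ratio K n \<pi> x i km kp" if "i < n" for i
    unfolding ratio_def using assms that cond_prob_nonneg by simp
  then show ?thesis unfolding move_prob_def by (auto intro!: sum_nonneg)
qed

lemma move_prob_rowsum:
  assumes "x \<in> states K n" and "kp \<in> {1..K}"
  shows "(\<Sum>y\<in>states K n. move_prob K n \<pi> x km kp y) = 1"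
proof (cases "cnt n x km = 0")
  case True
  then show ?thesis using assms finite_states by (simp add: move_prob_def)
next
  case False
  let ?I = "{i \<in> {..<n}. x i = km}"
  have "(\<Sum>y\<in>states K n. move_prob K n \<pi> x km kp y) = (\<Sum>i\<in>?I. 1 / real (cnt n x km))"
    unfolding move_prob_def if_not_P[OF False]
  proof (subst sum.swap, intro sum.cong refl)
    fix i assume "i \<in> ?I"
    then have "x(i := kp) \<in> states K n" using assms by (auto intro: fun_upd_in_states)
    let ?c = "1 / real (cnt n x km)" and ?m = "min 1 (ratio K n \<pi> x i km kp)"
    have "(\<Sum>y\<in>states K n. ?c * (?m * (if y = x(i := kp) then 1 else 0) + (1 - ?m) * (if y = x then 1 else 0)))
        = (\<Sum>y\<in>states K n. (if y = x(i := kp) then ?c * ?m else 0) + (if y = x then ?c * (1 - ?m) else 0))"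
      by (intro sum.cong) (auto simp flip: add_divide_distrib)
    also have "\<dots> = ?c * ?m + ?c * (1 - ?m)"
      using \<open>x(i := kp) \<in> states K n\<close> assms(1) finite_states by (simp add: sum.distrib)
    also have "\<dots> = ?c" by (simp add: algebra_simps)
    finally show "(\<Sum>y\<in>states K n. ?c * (?m * (if y = x(i := kp) then 1 else 0) + (1 - ?m) * (if y = x then 1 else 0)))
        = ?c" .
  qed
  also have "\<dots> = 1" using False by (simp add: cnt_def)
  finally show ?thesis .
qed

lemma stochastic_PR: "stochastic (states K n) (PR K n \<pi>)"
  unfolding stochastic_def
proof (intro conjI ballI)
  fix x y assume x: "x \<in> states K n"
  show "0 \<le> PR K n \<pi> x y"
    unfolding PR_def pc_def using move_prob_nonneg[OF x]
    by (intro sum_nonneg) (auto simp: pairs_def)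
next
  fix x assume x: "x \<in> states K n"
  have "(\<Sum>y\<in>states K n. PR K n \<pi> x y) = (\<Sum>(k, k')\<in>pairs K. pc K n x k k' *
      (1/2 * (\<Sum>y\<in>states K n. move_prob K n \<pi> x k k' y) + 1/2 * (\<Sum>y\<in>states K n. move_prob K n \<pi> x k' k y)))"
    unfolding PR_def
    by (subst sum.swap) (simp add: case_prod_beta sum.distrib sum_divide_distrib flip: sum_distrib_left)
  also have "\<dots> = (\<Sum>(k, k')\<in>pairs K. real (cnt n x k) + real (cnt n x k')) / (real (K - 1) * real n)"
    using move_prob_rowsum[OF x] unfolding pc_def sum_divide_distrib
    by (intro sum.cong) (auto simp: pairs_def)
  also have "\<dots> = 1"
    using sum_pairs[of "\<lambda>k. real (cnt n x k)" K] sum_cnt[OF x] K2 n1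
    by (simp flip: of_nat_sum)
  finally show "(\<Sum>y\<in>states K n. PR K n \<pi> x y) = 1" .
qed

lemma move_prob_eq_0:
  assumes "y \<noteq> x" and "\<And>j. j < n \<Longrightarrow> y \<noteq> x(j := kp)"
  shows "move_prob K n \<pi> x km kp y = 0"
  unfolding move_prob_def using assms by (auto intro!: sum.neutral)

lemma move_prob_fun_upd:
  assumes "i < n" and "b \<noteq> x i"
  shows "move_prob K n \<pi> x km kp (x(i := b)) =
    (if km = x i \<and> kp = b then min 1 (ratio K n \<pi> x i km kp) / cnt n x km else 0)"
proof -
  have moved: "x(i := b) \<noteq> x" using assms(2) by (metis fun_upd_same)
  show ?thesis
  proof (cases "cnt n x km = 0")
    case True
    then have "km \<noteq> x i" using cnt_pos[OF assms(1), of x] by auto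
    then show ?thesis using True moved by (simp add: move_prob_def)
  next
    case False
    have upd_eq: "x(i := b) = x(j := kp) \<longleftrightarrow> j = i \<and> kp = b" if "x j = km" for j
      using assms(2) by (metis fun_upd_apply)
    have "move_prob K n \<pi> x km kp (x(i := b)) =
        (\<Sum>j\<in>{j \<in> {..<n}. x j = km}. if j = i \<and> kp = b then min 1 (ratio K n \<pi> x j km kp) / cnt n x km else 0)"
      unfolding move_prob_def using False moved upd_eq by (auto intro!: sum.cong)
    also have "\<dots> = (if km = x i \<and> kp = b then min 1 (ratio K n \<pi> x i km kp) / cnt n x km else 0)"
      using assms(1) by (auto simp: sum.delta' intro!: sum.neutral)
    finally show ?thesis .
  qed
qed

lemma PR_fun_upd:
  assumes "x \<in> states K n" and "i < n" and "b \<in> {1..K}" and "b \<noteq> x i"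
  shows "PR K n \<pi> x (x(i := b)) = pc K n x (x i) b / 2 * (min 1 (ratio K n \<pi> x i (x i) b) / cnt n x (x i))"
proof -
  define a where "a = x i"
  define M where "M = min 1 (ratio K n \<pi> x i a b) / cnt n x a"
  have "a \<in> {1..K}" using assms(1,2) by (auto simp: a_def mem_states_iff)
  then have ab: "(min a b, max a b) \<in> pairs K" using assms(3,4) by (auto simp: pairs_def a_def)
  have "PR K n \<pi> x (x(i := b)) =
      (\<Sum>p\<in>pairs K. if p = (min a b, max a b) then pc K n x a b / 2 * M else 0)"
    unfolding PR_def
  proof (intro sum.cong refl)
    fix p assume "p \<in> pairs K"
    then obtain k k' where p: "p = (k, k')" and "k < k'" by (auto simp: pairs_def)
    then show "(case p of (k, k') \<Rightarrow> pc K n x k k' *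
          (1/2 * move_prob K n \<pi> x k k' (x(i := b)) + 1/2 * move_prob K n \<pi> x k' k (x(i := b)))) =
        (if p = (min a b, max a b) then pc K n x a b / 2 * M else 0)"
      using assms(4)
      by (auto simp: move_prob_fun_upd[where x = x, OF assms(2,4)] M_def a_def pc_def min_def max_def ac_simps)
  qed
  also have "\<dots> = pc K n x a b / 2 * M" using ab finite_pairs by simp
  finally show ?thesis by (simp add: M_def a_def)
qed

lemma cond_prob_ratio:
  assumes "x \<in> states K n" and "i < n" and "b \<in> {1..K}"
  shows "cond_prob K \<pi> x i b / cond_prob K \<pi> x i (x i) = \<pi> (x(i := b)) / \<pi> x"
proof (cases "(\<Sum>j\<in>{1..K}. \<pi> (x(i := j))) = 0")
  case True
  have "x i \<in> {1..K}" using assms(1,2) by (auto simp: mem_states_iff)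
  have "0 \<le> \<pi> (x(i := j))" if "j \<in> {1..K}" for j
    using \<pi> fun_upd_in_states[OF assms(1,2) that] by (simp add: prob_dist_def)
  then have "\<forall>j\<in>{1..K}. \<pi> (x(i := j)) = 0"
    using True by (intro sum_nonneg_eq_0_iff[THEN iffD1]) auto
  then have "\<pi> x = 0" using \<open>x i \<in> {1..K}\<close> by (metis fun_upd_triv)
  then show ?thesis by (simp add: cond_prob_def)
qed (simp add: cond_prob_def)

lemma weighted_PR_fun_upd:
  assumes "x \<in> states K n" and "i < n" and "b \<in> {1..K}" and "b \<noteq> x i"
  shows "\<pi> x * PR K n \<pi> x (x(i := b)) =
    pc K n x (x i) b / 2 * min (\<pi> x / cnt n x (x i)) (\<pi> (x(i := b)) / (real (cnt n x b) + 1))"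
proof -
  let ?A = "real (cnt n x (x i))" and ?B = "real (cnt n x b) + 1"
  have "\<pi> x * PR K n \<pi> x (x(i := b)) =
      pc K n x (x i) b / 2 * (\<pi> x / ?A * min 1 (?A / ?B * (\<pi> (x(i := b)) / \<pi> x)))"
    unfolding PR_fun_upd[OF assms] ratio_def cond_prob_ratio[OF assms(1-3)] by simp
  also have "\<dots> = pc K n x (x i) b / 2 * min (\<pi> x / ?A) (\<pi> (x(i := b)) / ?B)"
    using cnt_pos[OF assms(2)] \<pi> assms(1) fun_upd_in_states[OF assms(1-3)]
    by (subst mult_min_ratio) (auto simp: prob_dist_def)
  finally show ?thesis .
qed

lemma PR_eq_0:
  assumes "y \<noteq> x" and "\<And>i. i < n \<Longrightarrow> y \<noteq> x(i := y i)"
  shows "PR K n \<pi> x y = 0"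
proof -
  have "y \<noteq> x(j := k)" if "j < n" for j k
    using assms(2)[OF that] by (metis fun_upd_same)
  then show ?thesis unfolding PR_def using move_prob_eq_0[OF assms(1)] by simp
qed

lemma detailed_balance_fun_upd:
  assumes "x \<in> states K n" and "i < n" and "b \<in> {1..K}" and "b \<noteq> x i"
  shows "\<pi> x * PR K n \<pi> x (x(i := b)) = \<pi> (x(i := b)) * PR K n \<pi> (x(i := b)) x"
proof -
  define y where "y = x(i := b)"
  have y: "y \<in> states K n" "x i \<in> {1..K}" "x i \<noteq> y i" "x = y(i := x i)"
    using fun_upd_in_states[OF assms(1-3)] assms by (auto simp: y_def mem_states_iff)
  have "cnt n y b = cnt n x b + 1" "cnt n y (x i) + 1 = cnt n x (x i)"
    using cnt_fun_upd_new[where x = x, OF assms(2,4)] cnt_fun_upd_old[where x = x, OF assms(2,4)]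
      cnt_pos[OF assms(2), of x]
    by (simp_all add: y_def)
  then have "pc K n y b (x i) = pc K n x (x i) b" and "y i = b"
    by (simp_all add: pc_def y_def)
  then have "\<pi> y * PR K n \<pi> y x =
      pc K n x (x i) b / 2 * min (\<pi> y / (real (cnt n x b) + 1)) (\<pi> x / cnt n x (x i))"
    using weighted_PR_fun_upd[OF y(1) assms(2) y(2,3)] y(4) \<open>cnt n y b = cnt n x b + 1\<close>
      \<open>cnt n y (x i) + 1 = cnt n x (x i)\<close>
    by (metis of_nat_add of_nat_1)
  then show ?thesis
    using weighted_PR_fun_upd[OF assms] by (simp add: y_def min.commute)
qed

lemma reversible_PR: "reversible (states K n) (PR K n \<pi>) \<pi>"
  unfolding reversible_def
proof (intro ballI)
  fix x y assume x: "x \<in> states K n" and y: "y \<in> states K n"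
  have swap: "y = x(i := y i) \<longleftrightarrow> x = y(i := x i)" for i by (auto simp: fun_eq_iff)
  consider "y = x" | "y \<noteq> x" "\<forall>i<n. y \<noteq> x(i := y i)" | i where "i < n" "y = x(i := y i)" "y \<noteq> x"
    by blast
  then show "\<pi> x * PR K n \<pi> x y = \<pi> y * PR K n \<pi> y x"
  proof cases
    case 2
    then have "\<forall>i<n. x \<noteq> y(i := x i)" using swap by blast
    then show ?thesis using 2 PR_eq_0[of y x] PR_eq_0[of x y] by auto
  next
    case (3 i)
    define b where "b = y i"
    have "y = x(i := b)" "b \<noteq> x i" using 3(2,3) unfolding b_def by (metis fun_upd_triv)+
    moreover have "b \<in> {1..K}" using y 3(1) by (auto simp: b_def mem_states_iff)
    ultimately show ?thesis using detailed_balance_fun_upd[OF x 3(1)] by simp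
  qed simp
qed

lemma PR_fun_upd_pos:
  assumes pos: "\<forall>c\<in>states K n. 0 < \<pi> c"
    and "x \<in> states K n" and "i < n" and "b \<in> {1..K}" and "b \<noteq> x i"
  shows "0 < PR K n \<pi> x (x(i := b))"
proof -
  have "0 < pc K n x (x i) b"
    using cnt_pos[OF assms(3), of x] K2 n1 by (auto simp: pc_def intro!: divide_pos_pos add_pos_nonneg)
  moreover have "0 < \<pi> x" "0 < \<pi> (x(i := b))"
    using pos assms(2) fun_upd_in_states[OF assms(2-4)] by auto
  ultimately have "0 < \<pi> x * PR K n \<pi> x (x(i := b))"
    using cnt_pos[OF assms(3), of x] by (simp add: weighted_PR_fun_upd[OF assms(2-5)] add_pos_nonneg)
  then show ?thesis using \<open>0 < \<pi> x\<close> by (simp add: zero_less_mult_iff)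
qed

definition all_ones :: "nat \<Rightarrow> config" where
  "all_ones m = (\<lambda>i\<in>{..<m}. 1)"

lemma all_ones_in_states: "all_ones n \<in> states K n"
  using K2 by (auto simp: all_ones_def mem_states_iff)

lemma PR_all_ones_pos: "0 < PR K n \<pi> (all_ones n) (all_ones n)"
proof -
  let ?c = "all_ones n"
  let ?f = "\<lambda>(k, k'). pc K n ?c k k' * (1/2 * move_prob K n \<pi> ?c k k' ?c + 1/2 * move_prob K n \<pi> ?c k' k ?c)"
  have "cnt n ?c 2 = 0" "cnt n ?c 1 = n" by (simp_all add: cnt_def all_ones_def)
  then have "move_prob K n \<pi> ?c 2 1 ?c = 1" and "0 < pc K n ?c 1 2"
    using K2 n1 by (simp_all add: move_prob_def pc_def)
  moreover have "0 \<le> move_prob K n \<pi> ?c 1 2 ?c"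
    using K2 by (intro move_prob_nonneg all_ones_in_states) auto
  ultimately have "0 < ?f (1, 2)" by (simp add: add_nonneg_pos)
  also have "?f (1, 2) \<le> (\<Sum>p\<in>pairs K. ?f p)"
    using K2 all_ones_in_states move_prob_nonneg
    by (intro member_le_sum finite_pairs) (auto simp: pairs_def pc_def)
  finally show ?thesis by (simp add: PR_def)
qed


lemma mpow_PR_pos:
  assumes pos: "\<forall>c\<in>states K n. 0 < \<pi> c" and "x \<in> states K n" and "y \<in> states K n"
  shows "0 < mpow (states K n) (PR K n \<pi>) (n + m + n) x y"
proof -
  have path: "0 < mpow (states K n) (PR K n \<pi>) (card {i \<in> {..<n}. z i \<noteq> w i}) z w"
    if "z \<in> states K n" and "w \<in> states K n" for z w
    by (rule mpow_pos_hamming[OF stochastic_PR _ that]) (rule PR_fun_upd_pos[OF pos])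
  have close: "card {i \<in> {..<n}. z i \<noteq> w i} \<le> n" for z w :: config
    by (rule order_trans[OF card_mono[of "{..<n}"]]) auto
  have "\<exists>d\<le>n. 0 < mpow (states K n) (PR K n \<pi>) d z (all_ones n)"
    and "\<exists>d\<le>n. 0 < mpow (states K n) (PR K n \<pi>) d (all_ones n) z" if "z \<in> states K n" for z
    using path[OF that all_ones_in_states] path[OF all_ones_in_states that] close by blast+
  then show ?thesis
    using mpow_pos_via_hub[where h = "all_ones n" and N = n and m = m, OF finite_states stochastic_PR
        all_ones_in_states PR_all_ones_pos] assms(2,3)
    by blast
qed

end

theorem lemma1:
  fixes K n :: nat and \<pi> :: "config \<Rightarrow> real"
  assumes "K \<ge> 2" and "n \<ge> 1"
    and "prob_dist (states K n) \<pi>"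
  shows "reversible (states K n) (PR K n \<pi>) \<pi> \<and>
         ((\<forall>c\<in>states K n. \<pi> c > 0) \<longrightarrow>
            irreducible_chain (states K n) (PR K n \<pi>) \<and>
            aperiodic_chain (states K n) (PR K n \<pi>) \<and>
            uniformly_ergodic (states K n) (PR K n \<pi>) \<pi>)"
proof (intro conjI impI)
  let ?S = "states K n" and ?P = "PR K n \<pi>"
  show rev: "reversible ?S ?P \<pi>" by (rule reversible_PR[OF assms])
  assume pos: "\<forall>c\<in>states K n. \<pi> c > 0"
  have pos_pow: "0 < mpow ?S ?P (n + m + n) x y" if "x \<in> ?S" and "y \<in> ?S" for m x y
    using mpow_PR_pos[OF assms pos that] .
  show "irreducible_chain ?S ?P"
    unfolding irreducible_chain_def using pos_pow[where m = 0] by blast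
  show "aperiodic_chain ?S ?P"
  proof (rule aperiodic_chainI)
    show "0 < mpow ?S ?P (n + 0 + n) x x \<and> 0 < mpow ?S ?P (Suc (n + 0 + n)) x x" if "x \<in> ?S" for x
      using pos_pow[OF that that, where m = 0] pos_pow[OF that that, where m = 1] by simp
  qed (use assms(2) in simp)
  have "stationary ?S ?P \<pi>" by (rule reversible_imp_stationary[OF rev stochastic_PR[OF assms]])
  then show "uniformly_ergodic ?S ?P \<pi>"
    using pos_pow[where m = 0] assms(2)
    by (intro uniformly_ergodicI[where N = "n + n", OF finite_states stochastic_PR[OF assms] assms(3)]) auto
qed

end
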